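(* Let $R$ be a multirectangle in $\mathbb{R}^d$. For each $1\le i\le d$ let $F_i\subseteq(0,\infty)$ be a $\mathbb{Q}$-linearly independent set. Let $\mathcal{P}$ and $\mathcal{P}'$ be two finite partitions of $R$ into rectangles such that $\lambda(\operatorname{pr}_i(K))\in F_i$ for every $K\in\mathcal{P}\cup\mathcal{P}'$ and every $i$. Then there exists a bijection $\delta:\mathcal{P}\to\mathcal{P}'$ such that for every $K\in\mathcal{P}$ the rectangle $\delta(K)$ is a translate of $K$; moreover $\delta$ can be chosen with $\delta(K)=K$ for every $K\in\mathcal{P}\cap\mathcal{P}'$.
   Context: A rectangle in $\mathbb{R}^d$ is a set $\prod_{i=1}^d[a_i,b_i)$ with $a_i<b_i$ real; a multirectangle is a finite union of rectangles. $\operatorname{pr}_i$ is the projection onto the $i$-th coordinate and $\lambda$ is Lebesgue measure on $\mathbb{R}$. *)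

theory Defs
  imports "HOL-Analysis.Analysis"
begin

text \<open>Points of R^d are vectors real^'n, with d = CARD('n).
  A rectangle is a product of half-open intervals [a_i, b_i) with a_i < b_i.\<close>

definition rect :: "real^'n \<Rightarrow> real^'n \<Rightarrow> (real^'n) set" where
  "rect a b = {x. \<forall>i. a$i \<le> x$i \<and> x$i < b$i}"

definition is_rectangle :: "(real^'n) set \<Rightarrow> bool" where
  "is_rectangle K \<longleftrightarrow> (\<exists>a b. (\<forall>i. a$i < b$i) \<and> K = rect a b)"

definition is_multirectangle :: "(real^'n) set \<Rightarrow> bool" where
  "is_multirectangle R \<longleftrightarrow> (\<exists>\<R>. finite \<R> \<and> (\<forall>K\<in>\<R>. is_rectangle K) \<and> R = \<Union>\<R>)"

definition pr :: "'n \<Rightarrow> (real^'n) set \<Rightarrow> real set" where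
  "pr i K = (\<lambda>x. x$i) ` K"

definition rect_partition :: "(real^'n) set set \<Rightarrow> (real^'n) set \<Rightarrow> bool" where
  "rect_partition P R \<longleftrightarrow> finite P \<and> (\<forall>K\<in>P. is_rectangle K) \<and> \<Union>P = R \<and>
     (\<forall>K\<in>P. \<forall>L\<in>P. K \<noteq> L \<longrightarrow> K \<inter> L = {})"

definition rat_lin_indep :: "real set \<Rightarrow> bool" where
  "rat_lin_indep F \<longleftrightarrow> (\<forall>S c. finite S \<and> S \<subseteq> F \<and> (\<forall>s\<in>S. c s \<in> \<rat>) \<and>
     (\<Sum>s\<in>S. c s * s) = 0 \<longrightarrow> (\<forall>s\<in>S. c s = 0))"

end

theory Submission
  imports Defs
begin

text \<open>For additive maps \<open>\<phi>\<^sub>i : \<real> \<Rightarrow> \<real>\<close>, the sum over \<open>K \<in> P\<close> of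
  \<open>\<Prod>\<^sub>i \<phi>\<^sub>i (\<lambda> (pr\<^sub>i K))\<close> does not depend on the partition \<open>P\<close> of \<open>R\<close>: on the grid
  spanned by the corner coordinates of \<open>P\<close> and \<open>P'\<close> each factor \<open>\<phi>\<^sub>i (b\<^sub>i - a\<^sub>i)\<close>
  telescopes, so the term of a rectangle splits into the terms of its grid cells, and both
  partitions give the sum over the grid cells of \<open>R\<close>. Since \<open>F\<^sub>i\<close> is linearly independent
  over \<open>\<rat>\<close>, there are \<open>\<rat>\<close>-linear \<open>\<phi>\<^sub>i\<close> equal to 1 at a given \<open>s\<^sub>i \<in> F\<^sub>i\<close> and
  to 0 on the rest of \<open>F\<^sub>i\<close>, and then the invariant counts the rectangles with side lengths
  \<open>s\<close>. Hence \<open>P\<close> and \<open>P'\<close> contain equally many rectangles with any given side lengths.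
  Rectangles with equal side lengths are translates of each other, so matching the rectangles
  of \<open>P\<close> and \<open>P'\<close> with equal side lengths, while fixing those common to both partitions,
  gives \<open>\<delta>\<close>.\<close>

text \<open>\<open>Min {}\<close> is unspecified, so \<open>next_in T t\<close> is only meaningful for \<open>t < Max T\<close>.\<close>
definition next_in :: "'a::linorder set \<Rightarrow> 'a \<Rightarrow> 'a" where
  "next_in T t = Min {u\<in>T. t < u}"

lemma additive_telescope:
  fixes \<phi> :: "'a::linordered_ab_group_add \<Rightarrow> 'b::ab_group_add"
  assumes add: "\<And>x y. \<phi> (x + y) = \<phi> x + \<phi> y" and T: "finite T" "a \<in> T"
  shows "b \<in> T \<Longrightarrow> a \<le> b \<Longrightarrow>
    \<phi> (b - a) = (\<Sum>t\<in>{t\<in>T. a \<le> t \<and> t < b}. \<phi> (next_in T t - t))"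
proof (induction "card {t\<in>T. a \<le> t \<and> t < b}" arbitrary: b rule: less_induct)
  case less
  let ?S = "{t\<in>T. a \<le> t \<and> t < b}"
  have finS: "finite ?S" using T by auto
  show ?case
  proof (cases "a = b")
    case True
    moreover have "\<phi> 0 = 0" using add[of 0 0] by simp
    moreover have "?S = {}" using True by auto
    ultimately show ?thesis by (metis diff_self sum.empty)
  next
    case False
    with less.prems have "?S \<noteq> {}" using T by auto
    define t0 where "t0 = Max ?S"
    have t0: "t0 \<in> ?S" "\<And>t. t \<in> ?S \<Longrightarrow> t \<le> t0"
      using finS \<open>?S \<noteq> {}\<close> unfolding t0_def by (rule Max_in, simp)
    have below_t0: "{t\<in>T. a \<le> t \<and> t < t0} = ?S - {t0}"
      using t0 by force
    have "next_in T t0 = b"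
      unfolding next_in_def
    proof (rule Min_eqI)
      fix u assume u: "u \<in> {u\<in>T. t0 < u}"
      show "b \<le> u"
      proof (rule ccontr)
        assume "\<not> b \<le> u"
        with u t0(1) have "u \<in> ?S" by auto
        with u t0(2) show False by fastforce
      qed
    qed (use T less.prems t0 in auto)
    moreover have "\<phi> (t0 - a) = (\<Sum>t\<in>?S - {t0}. \<phi> (next_in T t - t))"
    proof -
      have "card {t\<in>T. a \<le> t \<and> t < t0} < card ?S"
        unfolding below_t0 using finS t0(1) by (rule card_Diff1_less)
      from less.hyps[OF this] t0(1) show ?thesis by (simp add: below_t0)
    qed
    ultimately have "(\<Sum>t\<in>?S. \<phi> (next_in T t - t)) = \<phi> (b - t0) + \<phi> (t0 - a)"
      using finS t0 by (simp add: sum.remove)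
    also have "\<dots> = \<phi> (b - a)"
      using add[of "b - t0" "t0 - a"] by simp
    finally show ?thesis by simp
  qed
qed

definition side_lengths :: "(real^'n) set \<Rightarrow> 'n \<Rightarrow> real" where
  "side_lengths K i = measure lborel (pr i K)"

definition side_product :: "('n \<Rightarrow> real \<Rightarrow> 'b::comm_monoid_mult) \<Rightarrow> (real^'n) set \<Rightarrow> 'b" where
  "side_product \<phi> K = (\<Prod>i\<in>UNIV. \<phi> i (side_lengths K i))"

definition grid :: "('n \<Rightarrow> 'a set) \<Rightarrow> ('a^'n) set" where
  "grid T = {c. \<forall>i. c$i \<in> T i}"

definition cell_weight :: "('n \<Rightarrow> real \<Rightarrow> 'b::comm_monoid_mult) \<Rightarrow> ('n \<Rightarrow> real set) \<Rightarrow> real^'n \<Rightarrow> 'b" where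
  "cell_weight \<phi> T c = (\<Prod>i\<in>UNIV. \<phi> i (next_in (T i) (c$i) - c$i))"

lemma pr_rect:
  assumes "\<forall>j. a$j < b$j"
  shows "pr i (rect a b) = {a$i..<b$i}"
proof
  show "pr i (rect a b) \<subseteq> {a$i..<b$i}" unfolding pr_def rect_def by auto
  show "{a$i..<b$i} \<subseteq> pr i (rect a b)"
  proof
    fix t assume t: "t \<in> {a$i..<b$i}"
    define x where "x = (\<chi> j. if j = i then t else a$j)"
    have "x \<in> rect a b" using t assms unfolding rect_def x_def by auto
    moreover have "x$i = t" unfolding x_def by simp
    ultimately show "t \<in> pr i (rect a b)" unfolding pr_def by force
  qed
qed

lemma side_lengths_rect:
  assumes "\<forall>j. a$j < b$j"
  shows "side_lengths (rect a b) i = b$i - a$i"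
  using assms by (simp add: side_lengths_def pr_rect less_imp_le)

lemma finite_grid:
  assumes "\<And>i. finite (T i)"
  shows "finite (grid T)"
proof -
  have "grid T \<subseteq> vec_lambda ` (\<Pi>\<^sub>E i\<in>UNIV. T i)"
  proof
    fix c assume "c \<in> grid T"
    then have "vec_nth c \<in> (\<Pi>\<^sub>E i\<in>UNIV. T i)" by (auto simp: grid_def)
    then show "c \<in> vec_lambda ` (\<Pi>\<^sub>E i\<in>UNIV. T i)" by (metis image_eqI vec_nth_inverse)
  qed
  then show ?thesis
    using assms by (meson finite_PiE finite_imageI finite_subset finite_class.finite_UNIV)
qed

lemma side_product_rect_eq_sum_cells:
  fixes \<phi> :: "'n::finite \<Rightarrow> real \<Rightarrow> 'b::comm_ring_1"
  assumes add: "\<And>i x y. \<phi> i (x + y) = \<phi> i x + \<phi> i y" and T: "\<And>i. finite (T i)"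
    and a: "\<And>i. a$i \<in> T i" and b: "\<And>i. b$i \<in> T i" and ab: "\<forall>i. a$i < b$i"
  shows "side_product \<phi> (rect a b) = (\<Sum>c\<in>grid T \<inter> rect a b. cell_weight \<phi> T c)"
proof -
  let ?between = "\<lambda>i. {t\<in>T i. a$i \<le> t \<and> t < b$i}"
  have "side_product \<phi> (rect a b) = (\<Prod>i\<in>UNIV. \<phi> i (b$i - a$i))"
    using ab by (simp add: side_product_def side_lengths_rect)
  also have "\<dots> = (\<Prod>i\<in>UNIV. \<Sum>t\<in>?between i. \<phi> i (next_in (T i) t - t))"
    using additive_telescope[of "\<phi> _", OF add T a b] ab by (simp add: less_imp_le)
  also have "\<dots> = (\<Sum>g\<in>(\<Pi>\<^sub>E i\<in>UNIV. ?between i). \<Prod>i\<in>UNIV. \<phi> i (next_in (T i) (g i) - g i))"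
    using T by (intro prod_sum_PiE) auto
  also have "\<dots> = (\<Sum>c\<in>grid T \<inter> rect a b. cell_weight \<phi> T c)"
    by (rule sum.reindex_bij_witness[of _ vec_nth vec_lambda])
      (auto simp: grid_def rect_def cell_weight_def)
  finally show ?thesis .
qed

lemma sum_side_product_eq_sum_grid:
  fixes \<phi> :: "'n::finite \<Rightarrow> real \<Rightarrow> 'b::comm_ring_1"
  assumes add: "\<And>i x y. \<phi> i (x + y) = \<phi> i x + \<phi> i y" and P: "rect_partition P R"
    and T: "\<And>i. finite (T i)"
    and corners: "\<And>K i. K \<in> P \<Longrightarrow> Inf (pr i K) \<in> T i \<and> Sup (pr i K) \<in> T i"
  shows "(\<Sum>K\<in>P. side_product \<phi> K) = (\<Sum>c\<in>grid T \<inter> R. cell_weight \<phi> T c)"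
proof -
  have "side_product \<phi> K = (\<Sum>c\<in>grid T \<inter> K. cell_weight \<phi> T c)" if K: "K \<in> P" for K
  proof -
    have "is_rectangle K" using P K by (simp add: rect_partition_def)
    then obtain a b where ab: "\<forall>i. a$i < b$i" and K_eq: "K = rect a b"
      unfolding is_rectangle_def by blast
    have "a$i \<in> T i \<and> b$i \<in> T i" for i
      using corners[OF K, of i] ab by (simp add: K_eq pr_rect)
    then show ?thesis
      unfolding K_eq by (intro side_product_rect_eq_sum_cells[OF add T _ _ ab]) auto
  qed
  then have "(\<Sum>K\<in>P. side_product \<phi> K) = (\<Sum>K\<in>P. \<Sum>c\<in>grid T \<inter> K. cell_weight \<phi> T c)"
    by (rule sum.cong[OF refl])
  also have "\<dots> = sum (cell_weight \<phi> T) (\<Union>K\<in>P. grid T \<inter> K)"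
  proof (rule sum.UNION_disjoint[symmetric])
    show "finite P" using P by (simp add: rect_partition_def)
    show "\<forall>K\<in>P. finite (grid T \<inter> K)" using finite_grid[of T] T by blast
    show "\<forall>K\<in>P. \<forall>L\<in>P. K \<noteq> L \<longrightarrow> grid T \<inter> K \<inter> (grid T \<inter> L) = {}"
      using P by (auto simp: rect_partition_def)
  qed
  also have "(\<Union>K\<in>P. grid T \<inter> K) = grid T \<inter> R"
    using P by (auto simp: rect_partition_def)
  finally show ?thesis .
qed

lemma sum_side_product_partition_invariant:
  fixes \<phi> :: "'n::finite \<Rightarrow> real \<Rightarrow> 'b::comm_ring_1"
  assumes add: "\<And>i x y. \<phi> i (x + y) = \<phi> i x + \<phi> i y"
    and P: "rect_partition P R" and P': "rect_partition P' R"
  shows "(\<Sum>K\<in>P. side_product \<phi> K) = (\<Sum>K\<in>P'. side_product \<phi> K)"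
proof -
  define T where "T i = (\<lambda>K. Inf (pr i K)) ` (P \<union> P') \<union> (\<lambda>K. Sup (pr i K)) ` (P \<union> P')" for i
  have T: "finite (T i)" for i
    using P P' by (auto simp: T_def rect_partition_def)
  have "(\<Sum>K\<in>P. side_product \<phi> K) = (\<Sum>c\<in>grid T \<inter> R. cell_weight \<phi> T c)"
    by (rule sum_side_product_eq_sum_grid[OF add P T]) (auto simp: T_def)
  moreover have "(\<Sum>K\<in>P'. side_product \<phi> K) = (\<Sum>c\<in>grid T \<inter> R. cell_weight \<phi> T c)"
    by (rule sum_side_product_eq_sum_grid[OF add P' T]) (auto simp: T_def)
  ultimately show ?thesis by simp
qed

definition rat_scale :: "rat \<Rightarrow> real \<Rightarrow> real" where
  "rat_scale q x = of_rat q * x"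

lemma vector_space_rat_scale: "vector_space rat_scale"
  unfolding vector_space_def rat_scale_def by (simp add: algebra_simps of_rat_add of_rat_mult)

lemma rat_lin_indep_imp_independent:
  assumes "rat_lin_indep F"
  shows "\<not> module.dependent rat_scale F"
proof
  assume "module.dependent rat_scale F"
  then obtain S u where S: "finite S" "S \<subseteq> F" "(\<Sum>v\<in>S. of_rat (u v) * v) = 0"
    and nonzero: "\<exists>v\<in>S. u v \<noteq> 0"
    unfolding module.dependent_explicit[OF vector_space_rat_scale[folded module_iff_vector_space]]
      rat_scale_def by blast
  have "\<forall>v\<in>S. of_rat (u v) = (0::real)"
    using assms[unfolded rat_lin_indep_def, rule_format, of S "\<lambda>v. of_rat (u v)"] S
    by (simp add: Rats_of_rat)
  with nonzero show False by simp
qed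

text \<open>The coordinate of \<open>f\<close> with respect to a Hamel basis extending \<open>F\<close>.\<close>
lemma additive_coordinate_functional:
  assumes "rat_lin_indep F" "f \<in> F"
  obtains \<phi> :: "real \<Rightarrow> real" where "\<And>x y. \<phi> (x + y) = \<phi> x + \<phi> y"
    and "\<And>g. g \<in> F \<Longrightarrow> \<phi> g = (if g = f then 1 else 0)"
proof
  interpret vector_space_pair rat_scale rat_scale
    by (simp add: vector_space_pair_def vector_space_rat_scale)
  let ?\<phi> = "construct F (\<lambda>g. if g = f then 1 else 0)"
  have indep: "\<not> module.dependent rat_scale F"
    using assms(1) by (rule rat_lin_indep_imp_independent)
  show "?\<phi> (x + y) = ?\<phi> x + ?\<phi> y" for x y
    using linear_construct[OF indep] by (rule linear_add)
  show "?\<phi> g = (if g = f then 1 else 0)" if "g \<in> F" for g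
    using construct_basis[OF indep that] .
qed

lemma prod_additive_indicator:
  fixes F :: "'n::finite \<Rightarrow> real set" and s :: "'n \<Rightarrow> real"
  assumes indep: "\<And>i. rat_lin_indep (F i)" and s: "\<And>i. s i \<in> F i"
  obtains \<phi> :: "'n \<Rightarrow> real \<Rightarrow> real" where "\<And>i x y. \<phi> i (x + y) = \<phi> i x + \<phi> i y"
    and "\<And>x. (\<And>i. x i \<in> F i) \<Longrightarrow> (\<Prod>i\<in>UNIV. \<phi> i (x i)) = (if x = s then 1 else 0)"
proof -
  have "\<forall>i. \<exists>\<psi>::real \<Rightarrow> real. (\<forall>x y. \<psi> (x + y) = \<psi> x + \<psi> y) \<and>
      (\<forall>g\<in>F i. \<psi> g = (if g = s i then 1 else 0))"
  proof
    fix i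
    show "\<exists>\<psi>::real \<Rightarrow> real. (\<forall>x y. \<psi> (x + y) = \<psi> x + \<psi> y) \<and>
      (\<forall>g\<in>F i. \<psi> g = (if g = s i then 1 else 0))"
      by (rule additive_coordinate_functional[OF indep s]) blast
  qed
  then obtain \<phi> :: "'n \<Rightarrow> real \<Rightarrow> real" where \<phi>: "\<forall>i. (\<forall>x y. \<phi> i (x + y) = \<phi> i x + \<phi> i y) \<and>
      (\<forall>g\<in>F i. \<phi> i g = (if g = s i then 1 else 0))"
    by (rule choice[THEN exE])
  then have add: "\<And>i x y. \<phi> i (x + y) = \<phi> i x + \<phi> i y"
    and coord: "\<And>i g. g \<in> F i \<Longrightarrow> \<phi> i g = (if g = s i then 1 else 0)"
    by blast+
  have "(\<Prod>i\<in>UNIV. \<phi> i (x i)) = (if x = s then 1 else 0)" if x: "\<And>i. x i \<in> F i" for x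
  proof (cases "x = s")
    case True
    then show ?thesis using coord[OF x] by simp
  next
    case False
    then obtain i where "x i \<noteq> s i" by auto
    then have "\<phi> i (x i) = 0" using coord[OF x] by simp
    then have "(\<Prod>i\<in>UNIV. \<phi> i (x i)) = 0" by (intro prod_zero) auto
    with False show ?thesis by simp
  qed
  with add that show ?thesis by blast
qed

lemma card_side_lengths_eq:
  fixes P P' :: "(real^'n) set set"
  assumes indep: "\<And>i. rat_lin_indep (F i)"
    and P: "rect_partition P R" and P': "rect_partition P' R"
    and F: "\<And>K i. K \<in> P \<union> P' \<Longrightarrow> side_lengths K i \<in> F i"
  shows "card {K\<in>P. side_lengths K = s} = card {K\<in>P'. side_lengths K = s}"
proof (cases "\<forall>i. s i \<in> F i")
  case True
  then have s: "\<And>i. s i \<in> F i" by blast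
  obtain \<phi> :: "'n \<Rightarrow> real \<Rightarrow> real" where add: "\<And>i x y. \<phi> i (x + y) = \<phi> i x + \<phi> i y"
    and indicator: "\<And>x. (\<And>i. x i \<in> F i) \<Longrightarrow> (\<Prod>i\<in>UNIV. \<phi> i (x i)) = (if x = s then 1 else 0)"
    using prod_additive_indicator[of F s, OF indep s] by blast
  have count: "real (card {K\<in>Q. side_lengths K = s}) = (\<Sum>K\<in>Q. side_product \<phi> K)"
    if "finite Q" "Q \<subseteq> P \<union> P'" for Q
  proof -
    have "real (card {K\<in>Q. side_lengths K = s}) = (\<Sum>K\<in>Q. if side_lengths K = s then 1 else 0)"
      using that(1) by (simp add: sum.inter_filter[symmetric])
    also have "\<dots> = (\<Sum>K\<in>Q. side_product \<phi> K)"
    proof (rule sum.cong[OF refl])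
      fix K assume "K \<in> Q"
      then have "\<And>i. side_lengths K i \<in> F i" using that(2) F by blast
      from indicator[OF this] show "(if side_lengths K = s then 1 else 0) = side_product \<phi> K"
        by (simp add: side_product_def)
    qed
    finally show ?thesis .
  qed
  have "finite P" "finite P'" using P P' by (simp_all add: rect_partition_def)
  then have "real (card {K\<in>P. side_lengths K = s}) = real (card {K\<in>P'. side_lengths K = s})"
    using count[of P] count[of P'] sum_side_product_partition_invariant[of \<phi>, OF add P P']
    by simp
  then show ?thesis by simp
next
  case False
  then have "{K\<in>P. side_lengths K = s} = {}" "{K\<in>P'. side_lengths K = s} = {}"
    using F by fastforce+
  then show ?thesis by (simp only: card.empty)
qed

lemma bij_betw_fibrewise:
  assumes "finite A" "finite B" "\<And>s. card {a\<in>A. f a = s} = card {b\<in>B. f b = s}"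
  obtains g where "bij_betw g A B" and "\<And>a. a \<in> A \<Longrightarrow> f (g a) = f a"
proof -
  have "\<exists>h. bij_betw h {a\<in>A. f a = s} {b\<in>B. f b = s}" for s
    using assms by (intro finite_same_card_bij) auto
  then obtain h where h: "\<And>s. bij_betw (h s) {a\<in>A. f a = s} {b\<in>B. f b = s}"
    by metis
  define g where "g a = h (f a) a" for a
  have "bij_betw g {a\<in>A. f a = s} {b\<in>B. f b = s}" for s
    using h[of s] by (rule bij_betw_cong[THEN iffD2, rotated]) (simp add: g_def)
  then have "bij_betw g (\<Union>s. {a\<in>A. f a = s}) (\<Union>s. {b\<in>B. f b = s})"
    by (intro bij_betw_UNION_disjoint) (auto simp: disjoint_family_on_def)
  moreover have "(\<Union>s. {a\<in>A. f a = s}) = A" "(\<Union>s. {b\<in>B. f b = s}) = B"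
    by auto
  moreover have "f (g a) = f a" if "a \<in> A" for a
    using h[of "f a"] that by (auto simp: g_def bij_betw_def)
  ultimately show ?thesis using that by auto
qed

lemma bij_betw_fibrewise_fixing_common:
  assumes A: "finite A" and B: "finite B"
    and fibres: "\<And>s. card {a\<in>A. f a = s} = card {b\<in>B. f b = s}"
  obtains g where "bij_betw g A B" and "\<And>a. a \<in> A \<Longrightarrow> f (g a) = f a"
    and "\<And>a. a \<in> A \<inter> B \<Longrightarrow> g a = a"
proof -
  have "card {a\<in>A - B. f a = s} = card {b\<in>B - A. f b = s}" for s
  proof -
    have "{a\<in>A - B. f a = s} = {a\<in>A. f a = s} - {c\<in>A \<inter> B. f c = s}"
      "{b\<in>B - A. f b = s} = {b\<in>B. f b = s} - {c\<in>A \<inter> B. f c = s}"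
      by auto
    with A B fibres[of s] show ?thesis
      by (simp add: card_Diff_subset subset_iff)
  qed
  then obtain h where h: "bij_betw h (A - B) (B - A)" "\<And>a. a \<in> A - B \<Longrightarrow> f (h a) = f a"
    using bij_betw_fibrewise[of "A - B" "B - A" f] A B by blast
  define g where "g a = (if a \<in> B then a else h a)" for a
  have "bij_betw g (A \<inter> B) (A \<inter> B)"
    by (rule bij_betw_cong[of _ id g, THEN iffD1]) (simp_all add: g_def)
  moreover have "bij_betw g (A - B) (B - A)"
    using h(1) by (rule bij_betw_cong[THEN iffD2, rotated]) (simp add: g_def)
  ultimately have "bij_betw g ((A \<inter> B) \<union> (A - B)) ((A \<inter> B) \<union> (B - A))"
    by (rule bij_betw_combine) auto
  moreover have "(A \<inter> B) \<union> (A - B) = A" "(A \<inter> B) \<union> (B - A) = B"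
    by auto
  ultimately show ?thesis
    using that h(2) by (auto simp: g_def)
qed

lemma translate_rect: "(\<lambda>x. x + v) ` rect a b = rect (a + v) (b + v)"
proof (intro set_eqI iffI)
  fix x assume "x \<in> rect (a + v) (b + v)"
  then have "x - v \<in> rect a b" by (simp add: rect_def algebra_simps)
  then show "x \<in> (\<lambda>x. x + v) ` rect a b" by (rule rev_image_eqI) simp
qed (auto simp: rect_def)

lemma translate_of_side_lengths_eq:
  assumes "is_rectangle K" "is_rectangle L" "side_lengths K = side_lengths L"
  shows "\<exists>v. L = (\<lambda>x. x + v) ` K"
proof -
  obtain a b where ab: "\<forall>i. a$i < b$i" and K: "K = rect a b"
    using assms(1) unfolding is_rectangle_def by blast
  obtain a' b' where ab': "\<forall>i. a'$i < b'$i" and L: "L = rect a' b'"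
    using assms(2) unfolding is_rectangle_def by blast
  have "b$i - a$i = b'$i - a'$i" for i
    using assms(3) side_lengths_rect[OF ab, of i] side_lengths_rect[OF ab', of i] K L by metis
  then have "a' = a + (a' - a)" "b' = b + (a' - a)"
    by (simp_all add: vec_eq_iff algebra_simps)
  then have "L = (\<lambda>x. x + (a' - a)) ` K"
    unfolding K L translate_rect by metis
  then show ?thesis ..
qed

theorem mainTheorem16:
  fixes R :: "(real^'n) set"
    and F :: "'n \<Rightarrow> real set"
    and P P' :: "(real^'n) set set"
  assumes "is_multirectangle R"
    and "\<And>i. F i \<subseteq> {0<..}"
    and "\<And>i. rat_lin_indep (F i)"
    and "rect_partition P R"
    and "rect_partition P' R"
    and "\<And>K i. K \<in> P \<union> P' \<Longrightarrow> measure lborel (pr i K) \<in> F i"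
  shows "\<exists>\<delta>. bij_betw \<delta> P P' \<and> (\<forall>K\<in>P. \<exists>v. \<delta> K = (\<lambda>x. x + v) ` K) \<and>
             (\<forall>K\<in>P \<inter> P'. \<delta> K = K)"
proof -
  have fin: "finite P" "finite P'" and rectangles: "\<And>K. K \<in> P \<union> P' \<Longrightarrow> is_rectangle K"
    using assms(4,5) unfolding rect_partition_def by auto
  have "\<And>K i. K \<in> P \<union> P' \<Longrightarrow> side_lengths K i \<in> F i"
    using assms(6) by (simp add: side_lengths_def)
  then have "card {K\<in>P. side_lengths K = s} = card {K\<in>P'. side_lengths K = s}" for s
    by (rule card_side_lengths_eq[OF assms(3-5)])
  then obtain \<delta> where \<delta>: "bij_betw \<delta> P P'" "\<And>K. K \<in> P \<Longrightarrow> side_lengths (\<delta> K) = side_lengths K"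
    "\<And>K. K \<in> P \<inter> P' \<Longrightarrow> \<delta> K = K"
    using bij_betw_fibrewise_fixing_common[OF fin] by blast
  have "\<exists>v. \<delta> K = (\<lambda>x. x + v) ` K" if "K \<in> P" for K
  proof (rule translate_of_side_lengths_eq)
    show "is_rectangle K" "is_rectangle (\<delta> K)"
      using that bij_betw_apply[OF \<delta>(1) that] rectangles by simp_all
  qed (use that \<delta>(2) in simp)
  with \<delta> show ?thesis by blast
qed

end
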